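(* Let $\alpha>0$, let $\mathscr{K}$ be a convex feasible functional, and consider the augmented dual ascent scheme $$x^{n+1} = \operatorname{arg\,min}_{x} \mathscr{K}(x)+\langle x,\Lambda^n\rangle +\frac{\alpha}{2}\|x\|^2,\qquad \Lambda^{n+1} = \Lambda^{n} + \alpha\mathcal{P}_{\mathcal{M}^\perp}(x^{n+1}),\qquad \Lambda^0=0.$$ Define $\mathscr{J}(x)=\mathscr{K}(x)+\frac{\alpha}{2}\|\mathcal{P}_{\mathcal{M}}x\|^2$ and $h(\Lambda)=\min_x \mathscr{J}(x)+\langle x,\mathcal{P}_{\mathcal{M}^\perp}\Lambda\rangle$. Suppose that $(\Lambda^{n})_{n=1}^\infty$ is bounded. Then the set of maximizers of $h$ is non-empty and $(\Lambda^{n})_{n=1}^\infty$ is Fej\'{e}r monotone with respect to it. Moreover, if $c$ is the supremum of $h$ then $c-h(\Lambda^n)=o(1/n)$.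
   Context: $\mathcal{H}$ is a finite dimensional Hilbert space, $\mathcal{M}\subset\mathcal{H}$ a linear subspace, $\mathcal{P}_{\mathcal{M}}$, $\mathcal{P}_{\mathcal{M}^\perp}$ the orthogonal projections onto $\mathcal{M}$, $\mathcal{M}^\perp$. A functional is called feasible if it is lower semi-continuous, proper, bounded below, and satisfies $\lim_{\|x\|\rightarrow\infty}\mathscr{K}(x)/\|x\|=\infty$. *)

theory Defs
  imports "HOL-Analysis.Analysis"
begin

definition orth_proj :: "'a::euclidean_space set \<Rightarrow> 'a \<Rightarrow> 'a" where
  "orth_proj S x = (THE y. y \<in> S \<and> x - y \<in> orthogonal_comp S)"

definition lsc :: "('a::topological_space \<Rightarrow> ereal) \<Rightarrow> bool" where
  "lsc K \<longleftrightarrow> (\<forall>x. K x \<le> Liminf (at x) K)"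

definition proper_fun :: "('a \<Rightarrow> ereal) \<Rightarrow> bool" where
  "proper_fun K \<longleftrightarrow> (\<forall>x. K x \<noteq> -\<infinity>) \<and> (\<exists>x. K x \<noteq> \<infinity>)"

definition bounded_below_fun :: "('a \<Rightarrow> ereal) \<Rightarrow> bool" where
  "bounded_below_fun K \<longleftrightarrow> (\<exists>B::real. \<forall>x. ereal B \<le> K x)"

definition feasible :: "('a::real_normed_vector \<Rightarrow> ereal) \<Rightarrow> bool" where
  "feasible K \<longleftrightarrow> lsc K \<and> proper_fun K \<and> bounded_below_fun K \<and>
     ((\<lambda>x. K x / ereal (norm x)) \<longlongrightarrow> \<infinity>) at_infinity"

definition convex_ereal :: "('a::real_vector \<Rightarrow> ereal) \<Rightarrow> bool" where
  "convex_ereal K \<longleftrightarrow> (\<forall>x y t. 0 < t \<and> t < 1 \<longrightarrow>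
     K (t *\<^sub>R x + (1 - t) *\<^sub>R y) \<le> ereal t * K x + ereal (1 - t) * K y)"

definition fejer_monotone :: "(nat \<Rightarrow> 'a::real_normed_vector) \<Rightarrow> nat \<Rightarrow> 'a set \<Rightarrow> bool" where
  "fejer_monotone L n0 S \<longleftrightarrow>
     (\<forall>z\<in>S. \<forall>n\<ge>n0. norm (L (Suc n) - z) \<le> norm (L n - z))"

end

theory Submission imports Defs begin

text \<open>Rewritten with the multiplier update, the optimality condition of the primal step says that
  \<open>x(n+1)\<close> minimizes the Lagrangian \<open>J y + y \<bullet> \<Lambda>(n+1)\<close>. Hence \<open>h(\<Lambda>(n+1))\<close> is attained at
  \<open>x(n+1)\<close>, and the projection of \<open>x(n+1)\<close> onto \<open>M\<^sup>\<bottom>\<close> is a supergradient of the concave function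
  \<open>h\<close> at \<open>\<Lambda>(n+1)\<close>: the scheme is a proximal point ascent on \<open>h\<close>. The usual estimate
  \<open>2\<alpha> (h L - h(\<Lambda>(n+1))) \<le> \<parallel>\<Lambda> n - L\<parallel>\<^sup>2 - \<parallel>\<Lambda>(n+1) - L\<parallel>\<^sup>2\<close> for \<open>L \<in> M\<^sup>\<bottom>\<close> then makes
  \<open>h(\<Lambda> n)\<close> increasing, bounds the partial sums of the gaps \<open>h L - h(\<Lambda> n)\<close> and gives Fejer
  monotonicity with respect to the maximizers. A cluster point of the bounded multipliers is a
  maximizer, so the gaps \<open>c - h(\<Lambda> n)\<close> are nonnegative, decreasing and summable, hence \<open>o(1/n)\<close>.\<close>

lemma orth_proj_unique:
  fixes S :: "'a::euclidean_space set"
  assumes "subspace S" "y \<in> S" "x - y \<in> orthogonal_comp S"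
  shows "orth_proj S x = y"
  unfolding orth_proj_def
proof (rule the_equality)
  show "y \<in> S \<and> x - y \<in> orthogonal_comp S" using assms by blast
next
  fix y' assume y': "y' \<in> S \<and> x - y' \<in> orthogonal_comp S"
  have "y - y' \<in> S" using assms y' by (simp add: subspace_diff)
  moreover have "(x - y') - (x - y) \<in> orthogonal_comp S"
    using assms y' subspace_diff[OF subspace_orthogonal_comp] by blast
  ultimately have "orthogonal (y - y') (y - y')"
    by (auto simp: orthogonal_comp_def)
  then show "y' = y" by (simp add: orthogonal_self)
qed

lemma
  fixes S :: "'a::euclidean_space set"
  assumes "subspace S"
  shows orth_proj_in: "orth_proj S x \<in> S"
    and orth_proj_diff_in_orthogonal_comp: "x - orth_proj S x \<in> orthogonal_comp S"
proof -
  have span: "span S = S" using assms by simp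
  obtain y z where "y \<in> S" "\<And>w. w \<in> S \<Longrightarrow> orthogonal z w" "x = y + z"
    using orthogonal_subspace_decomp_exists[of S x] unfolding span by blast
  then have "y \<in> S" "x - y \<in> orthogonal_comp S"
    by (auto simp: orthogonal_comp_def orthogonal_commute)
  with orth_proj_unique[OF assms] show "orth_proj S x \<in> S" "x - orth_proj S x \<in> orthogonal_comp S"
    by simp_all
qed

lemma orth_proj_ident:
  fixes S :: "'a::euclidean_space set"
  assumes "subspace S" "v \<in> S"
  shows "orth_proj S v = v"
  using assms by (intro orth_proj_unique) (auto simp: orthogonal_comp_def orthogonal_def)

lemma inner_orth_proj_left:
  fixes S :: "'a::euclidean_space set"
  assumes "subspace S" "v \<in> S"
  shows "orth_proj S u \<bullet> v = u \<bullet> v"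
proof -
  have "(u - orth_proj S u) \<bullet> v = 0"
    using orth_proj_diff_in_orthogonal_comp[OF assms(1)] assms(2)
    by (auto simp: orthogonal_comp_def orthogonal_def inner_commute)
  then show ?thesis by (simp add: inner_diff_left)
qed

lemma orth_proj_orthogonal_comp:
  fixes S :: "'a::euclidean_space set"
  assumes "subspace S"
  shows "orth_proj (orthogonal_comp S) u = u - orth_proj S u"
proof (rule orth_proj_unique)
  show "u - (u - orth_proj S u) \<in> orthogonal_comp (orthogonal_comp S)"
    using orth_proj_in[OF assms] orthogonal_comp_subset by auto
qed (use orth_proj_diff_in_orthogonal_comp[OF assms] subspace_orthogonal_comp in auto)

lemma norm_diff_power2_step:
  fixes a p q :: "'a::real_inner"
  shows "(norm (a - q))\<^sup>2 - (norm (a + t *\<^sub>R p - q))\<^sup>2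
         = 2 * t * (p \<bullet> (q - (a + t *\<^sub>R p))) + t\<^sup>2 * (norm p)\<^sup>2"
  unfolding power2_norm_eq_inner by (simp add: inner_commute algebra_simps power2_eq_square)

lemma quadratic_minimizer_subgradient:
  fixes K :: "'a::real_inner \<Rightarrow> ereal"
  assumes convex: "convex_ereal K" and not_minf: "\<And>z. K z \<noteq> -\<infinity>" and "0 \<le> \<alpha>"
    and min: "\<And>z. K u + ereal (u \<bullet> L + \<alpha> / 2 * (norm u)\<^sup>2)
                   \<le> K z + ereal (z \<bullet> L + \<alpha> / 2 * (norm z)\<^sup>2)"
    and Ku: "K u = ereal ku" and Ky: "K y = ereal ky"
  shows "ku \<le> ky + (y - u) \<bullet> (L + \<alpha> *\<^sub>R u)"
proof -
  define g where "g t = ky + (y - u) \<bullet> (L + \<alpha> *\<^sub>R u) + t * (\<alpha> / 2 * (norm (y - u))\<^sup>2)" for t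
  have "ku \<le> g t" if t: "0 < t" "t < 1" for t
  proof -
    define z where "z = u + t *\<^sub>R (y - u)"
    have "z = t *\<^sub>R y + (1 - t) *\<^sub>R u"
      by (simp add: z_def algebra_simps)
    then have "K z \<le> ereal t * K y + ereal (1 - t) * K u"
      using convex t unfolding convex_ereal_def by blast
    then obtain kz where Kz: "K z = ereal kz" and kz: "kz \<le> t * ky + (1 - t) * ku"
      using not_minf[of z] by (cases "K z") (auto simp: Ku Ky)
    have "ku + (u \<bullet> L + \<alpha> / 2 * (norm u)\<^sup>2) \<le> kz + (z \<bullet> L + \<alpha> / 2 * (norm z)\<^sup>2)"
      using min[of z] by (simp add: Ku Kz)
    also have "(norm z)\<^sup>2 = (norm u)\<^sup>2 + 2 * t * (u \<bullet> (y - u)) + t\<^sup>2 * (norm (y - u))\<^sup>2"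
      unfolding z_def power2_norm_eq_inner
      by (simp add: inner_commute algebra_simps power2_eq_square)
    also have "z \<bullet> L = u \<bullet> L + t * ((y - u) \<bullet> L)"
      unfolding z_def by (simp add: algebra_simps)
    finally have "t * ku \<le> t * g t"
      using kz by (simp add: g_def algebra_simps inner_commute power2_eq_square)
    with t show ?thesis by simp
  qed
  moreover have "(g \<longlongrightarrow> g 0) (at_right 0)"
    unfolding g_def by (intro tendsto_intros)
  ultimately have "ku \<le> g 0"
    by (intro tendsto_lowerbound[where F = "at_right 0"])
      (auto simp: eventually_at_right_field intro!: exI[of _ 1])
  then show ?thesis by (simp add: g_def)
qed

lemma summable_decseq_mult_LIMSEQ_zero:
  fixes e :: "nat \<Rightarrow> real"
  assumes nonneg: "\<And>n. 0 \<le> e n" and dec: "decseq e" and "summable e"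
  shows "(\<lambda>n. real n * e n) \<longlonglongrightarrow> 0"
proof (rule LIMSEQ_I)
  fix r :: real assume "0 < r"
  then obtain N where N: "\<And>m n. N \<le> m \<Longrightarrow> norm (sum e {m..<n}) < r / 2"
    using \<open>summable e\<close> unfolding summable_Cauchy by (meson half_gt_zero)
  have "\<bar>real n * e n\<bar> < r" if "2 * N \<le> n" for n
  proof -
    \<comment> \<open>\<open>n/2\<close> terms of the Cauchy block \<open>{n div 2..<n}\<close> each dominate \<open>e n\<close>\<close>
    have half: "real n \<le> 2 * real (card {n div 2..<n})" by simp
    have "\<bar>real n * e n\<bar> \<le> 2 * (real (card {n div 2..<n}) * e n)"
      using mult_right_mono[OF half nonneg[of n]] nonneg[of n] by (simp add: algebra_simps)
    also have "real (card {n div 2..<n}) * e n \<le> sum e {n div 2..<n}"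
      using dec by (intro sum_bounded_below) (auto simp: decseq_def)
    also have "sum e {n div 2..<n} < r / 2"
      using N[of "n div 2" n] that by fastforce
    finally show ?thesis by simp
  qed
  then show "\<exists>no. \<forall>n\<ge>no. norm (real n * e n - 0) < r" by auto
qed

locale augmented_dual_ascent =
  fixes K :: "'a::euclidean_space \<Rightarrow> ereal"
    and M :: "'a set"
    and \<alpha> :: real
    and x \<Lambda> :: "nat \<Rightarrow> 'a"
  assumes subspace_M: "subspace M"
    and step_pos: "\<alpha> > 0"
    and convex_K: "convex_ereal K"
    and proper_K: "proper_fun K"
    and multiplier_0: "\<Lambda> 0 = 0"
    and primal_step: "\<And>n y. K (x (Suc n)) + ereal (x (Suc n) \<bullet> \<Lambda> n + \<alpha> / 2 * (norm (x (Suc n)))\<^sup>2)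
                              \<le> K y + ereal (y \<bullet> \<Lambda> n + \<alpha> / 2 * (norm y)\<^sup>2)"
    and multiplier_step: "\<And>n. \<Lambda> (Suc n) = \<Lambda> n + \<alpha> *\<^sub>R orth_proj (orthogonal_comp M) (x (Suc n))"
begin

abbreviation proj :: "'a \<Rightarrow> 'a" where
  "proj \<equiv> orth_proj M"

abbreviation proj_perp :: "'a \<Rightarrow> 'a" where
  "proj_perp \<equiv> orth_proj (orthogonal_comp M)"

definition J :: "'a \<Rightarrow> ereal" where
  "J y = K y + ereal (\<alpha> / 2 * (norm (proj y))\<^sup>2)"

definition lagrangian :: "'a \<Rightarrow> 'a \<Rightarrow> ereal" where
  "lagrangian y L = J y + ereal (y \<bullet> L)"

definition dual :: "'a \<Rightarrow> ereal" where
  "dual L = (INF y. lagrangian y (proj_perp L))"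

definition residual :: "nat \<Rightarrow> 'a" where
  "residual n = proj_perp (x (Suc n))"

definition dual_value :: "nat \<Rightarrow> real" where
  "dual_value n = real_of_ereal (dual (\<Lambda> (Suc n)))"

lemma multiplier_Suc: "\<Lambda> (Suc n) = \<Lambda> n + \<alpha> *\<^sub>R residual n"
  by (simp add: multiplier_step residual_def)

lemma residual_in_orthogonal_comp: "residual n \<in> orthogonal_comp M"
  unfolding residual_def by (rule orth_proj_in[OF subspace_orthogonal_comp])

lemma multiplier_in_orthogonal_comp: "\<Lambda> n \<in> orthogonal_comp M"
proof (induction n)
  case 0
  then show ?case using multiplier_0 subspace_0[OF subspace_orthogonal_comp] by simp
next
  case (Suc n)
  then show ?case
    unfolding multiplier_Suc using residual_in_orthogonal_comp
    by (intro subspace_add subspace_scale subspace_orthogonal_comp)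
qed

lemma proj_perp_multiplier [simp]: "proj_perp (\<Lambda> n) = \<Lambda> n"
  by (rule orth_proj_ident[OF subspace_orthogonal_comp multiplier_in_orthogonal_comp])

lemma K_not_minf: "K y \<noteq> -\<infinity>"
  using proper_K by (simp add: proper_fun_def)

lemma K_iterate_finite:
  obtains k where "K (x (Suc n)) = ereal k"
proof -
  obtain y where "K y \<noteq> \<infinity>" using proper_K by (auto simp: proper_fun_def)
  then have "K (x (Suc n)) \<noteq> \<infinity>"
    using primal_step[of n y] K_not_minf[of y] by (cases "K y") auto
  then show ?thesis using that K_not_minf by (cases "K (x (Suc n))") auto
qed

lemma lagrangian_iterate_le: "lagrangian (x (Suc n)) (\<Lambda> (Suc n)) \<le> lagrangian y (\<Lambda> (Suc n))"
proof (cases "K y")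
  case (real ky)
  define u where "u = x (Suc n)"
  obtain ku where Ku: "K u = ereal ku" using K_iterate_finite unfolding u_def by blast
  have subgrad: "ku \<le> ky + (y - u) \<bullet> (\<Lambda> n + \<alpha> *\<^sub>R u)"
    using quadratic_minimizer_subgradient[OF convex_K K_not_minf _ primal_step[of n, folded u_def] Ku real]
      step_pos by simp
  have "u = proj u + residual n"
    using orth_proj_orthogonal_comp[OF subspace_M] by (simp add: residual_def u_def)
  then have "\<Lambda> n + \<alpha> *\<^sub>R u = \<Lambda> (Suc n) + \<alpha> *\<^sub>R proj u"
    by (metis multiplier_Suc add.assoc add.commute scaleR_add_right)
  then have split: "(y - u) \<bullet> (\<Lambda> n + \<alpha> *\<^sub>R u) = (y - u) \<bullet> \<Lambda> (Suc n) + \<alpha> * ((y - u) \<bullet> proj u)"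
    by (simp add: inner_add_right)
  have "(y - u) \<bullet> proj u = proj y \<bullet> proj u - proj u \<bullet> proj u"
    using inner_orth_proj_left[OF subspace_M orth_proj_in[OF subspace_M]]
    by (simp add: inner_diff_left)
  also have "\<dots> \<le> ((norm (proj y))\<^sup>2 - (norm (proj u))\<^sup>2) / 2"
    using zero_le_power2[of "norm (proj y - proj u)"]
    by (simp add: power2_norm_eq_inner inner_diff_left inner_diff_right inner_commute)
  finally have "\<alpha> * ((y - u) \<bullet> proj u) \<le> \<alpha> / 2 * ((norm (proj y))\<^sup>2 - (norm (proj u))\<^sup>2)"
    using step_pos by (simp add: mult_left_mono)
  with subgrad split have "ku + \<alpha> / 2 * (norm (proj u))\<^sup>2 + u \<bullet> \<Lambda> (Suc n)
      \<le> ky + \<alpha> / 2 * (norm (proj y))\<^sup>2 + y \<bullet> \<Lambda> (Suc n)"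
    by (simp add: algebra_simps)
  then show ?thesis unfolding lagrangian_def J_def u_def[symmetric] by (simp add: Ku real)
next
  case PInf
  then show ?thesis by (simp add: lagrangian_def J_def)
qed (use K_not_minf in simp)

lemma dual_multiplier_Suc_eq_lagrangian: "dual (\<Lambda> (Suc n)) = lagrangian (x (Suc n)) (\<Lambda> (Suc n))"
  unfolding dual_def proj_perp_multiplier
  by (intro antisym INF_lower INF_greatest lagrangian_iterate_le) simp

lemma dual_multiplier_Suc: "dual (\<Lambda> (Suc n)) = ereal (dual_value n)"
proof -
  obtain k where "K (x (Suc n)) = ereal k" by (rule K_iterate_finite)
  then show ?thesis
    by (simp add: dual_value_def dual_multiplier_Suc_eq_lagrangian lagrangian_def J_def)
qed

lemma dual_supergradient:
  "dual L \<le> ereal (dual_value n + residual n \<bullet> (proj_perp L - \<Lambda> (Suc n)))"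
proof -
  define w where "w = proj_perp L - \<Lambda> (Suc n)"
  have "w \<in> orthogonal_comp M"
    unfolding w_def using orth_proj_in[OF subspace_orthogonal_comp] multiplier_in_orthogonal_comp
    by (intro subspace_diff subspace_orthogonal_comp)
  then have "x (Suc n) \<bullet> w = residual n \<bullet> w"
    unfolding residual_def by (rule inner_orth_proj_left[OF subspace_orthogonal_comp, symmetric])
  have "dual L \<le> lagrangian (x (Suc n)) (proj_perp L)"
    unfolding dual_def by (rule INF_lower) simp
  also have "\<dots> = lagrangian (x (Suc n)) (\<Lambda> (Suc n)) + ereal (x (Suc n) \<bullet> w)"
    by (simp add: lagrangian_def w_def inner_diff_right add.assoc)
  also have "\<dots> = ereal (dual_value n + residual n \<bullet> w)"
    using \<open>x (Suc n) \<bullet> w = residual n \<bullet> w\<close>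
    by (simp flip: dual_multiplier_Suc_eq_lagrangian add: dual_multiplier_Suc)
  finally show ?thesis by (simp add: w_def)
qed

lemma incseq_dual_value: "incseq dual_value"
proof (rule incseq_SucI)
  fix n
  have "ereal (dual_value n) \<le> ereal (dual_value (Suc n) - \<alpha> * (residual (Suc n) \<bullet> residual (Suc n)))"
    using dual_supergradient[of "\<Lambda> (Suc n)" "Suc n"]
    by (simp add: dual_multiplier_Suc multiplier_Suc[of "Suc n"])
  moreover have "0 \<le> \<alpha> * (residual (Suc n) \<bullet> residual (Suc n))"
    using step_pos by simp
  ultimately show "dual_value n \<le> dual_value (Suc n)" by simp
qed

lemma dist_multiplier_decrease:
  assumes "ereal r \<le> dual L"
  shows "2 * \<alpha> * (r - dual_value n)
         \<le> (norm (\<Lambda> n - proj_perp L))\<^sup>2 - (norm (\<Lambda> (Suc n) - proj_perp L))\<^sup>2"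
proof -
  define p q where "p = residual n" and "q = proj_perp L"
  have "r \<le> dual_value n + p \<bullet> (q - \<Lambda> (Suc n))"
    using order_trans[OF assms dual_supergradient] by (simp add: p_def q_def)
  then have "2 * \<alpha> * (r - dual_value n) \<le> 2 * \<alpha> * (p \<bullet> (q - \<Lambda> (Suc n)))"
    using step_pos by (intro mult_left_mono) auto
  also have "\<dots> \<le> 2 * \<alpha> * (p \<bullet> (q - \<Lambda> (Suc n))) + \<alpha>\<^sup>2 * (norm p)\<^sup>2"
    by simp
  also have "\<dots> = (norm (\<Lambda> n - q))\<^sup>2 - (norm (\<Lambda> (Suc n) - q))\<^sup>2"
    unfolding multiplier_Suc p_def[symmetric] by (rule norm_diff_power2_step[symmetric])
  finally show ?thesis by (simp add: q_def)
qed

lemma sum_dual_gap_le: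
  assumes "ereal r \<le> dual L"
  shows "(\<Sum>n<N. r - dual_value n) \<le> (norm (proj_perp L))\<^sup>2 / (2 * \<alpha>)"
proof -
  define d where "d n = (norm (\<Lambda> n - proj_perp L))\<^sup>2" for n
  have "2 * \<alpha> * (\<Sum>n<N. r - dual_value n) = (\<Sum>n<N. 2 * \<alpha> * (r - dual_value n))"
    by (simp add: sum_distrib_left)
  also have "\<dots> \<le> (\<Sum>n<N. d n - d (Suc n))"
    using dist_multiplier_decrease[OF assms] by (intro sum_mono) (simp add: d_def)
  also have "\<dots> = d 0 - d N"
    by (rule sum_lessThan_telescope')
  also have "\<dots> \<le> (norm (proj_perp L))\<^sup>2"
    by (simp add: d_def multiplier_0)
  finally show ?thesis
    using step_pos by (simp add: field_simps)
qed

lemma dist_maximizer_decrease: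
  assumes "\<forall>L. dual L \<le> dual z"
  shows "norm (\<Lambda> (Suc n) - z) \<le> norm (\<Lambda> n - z)"
proof -
  have "ereal (dual_value n) \<le> dual z"
    using assms by (simp flip: dual_multiplier_Suc)
  from dist_multiplier_decrease[OF this, of n]
  have "(norm (\<Lambda> (Suc n) - proj_perp z))\<^sup>2 \<le> (norm (\<Lambda> n - proj_perp z))\<^sup>2"
    by simp
  moreover have "(norm (\<Lambda> m - z))\<^sup>2 = (norm (\<Lambda> m - proj_perp z))\<^sup>2 + (norm (proj z))\<^sup>2" for m
  proof -
    have "\<Lambda> m - proj_perp z \<in> orthogonal_comp M"
      using multiplier_in_orthogonal_comp orth_proj_in[OF subspace_orthogonal_comp]
      by (intro subspace_diff subspace_orthogonal_comp)
    then have "orthogonal (proj z) (\<Lambda> m - proj_perp z)"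
      using orth_proj_in[OF subspace_M, of z] unfolding orthogonal_comp_def by blast
    then have orth: "orthogonal (\<Lambda> m - proj_perp z) (- proj z)"
      by (simp add: orthogonal_commute orthogonal_clauses)
    have split: "\<Lambda> m - z = (\<Lambda> m - proj_perp z) + (- proj z)"
      by (simp add: orth_proj_orthogonal_comp[OF subspace_M])
    show ?thesis
      unfolding split norm_add_Pythagorean[OF orth] by simp
  qed
  ultimately have "(norm (\<Lambda> (Suc n) - z))\<^sup>2 \<le> (norm (\<Lambda> n - z))\<^sup>2"
    by simp
  then show ?thesis
    by (rule power2_le_imp_le) simp
qed

end

locale bounded_augmented_dual_ascent = augmented_dual_ascent +
  assumes bounded_multipliers: "bounded (range \<Lambda>)"
begin

lemma bdd_above_dual_value: "bdd_above (range dual_value)"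
proof -
  obtain B where B: "\<And>n. norm (\<Lambda> n) \<le> B"
    using bounded_multipliers by (auto simp: bounded_iff)
  have "dual_value n \<le> dual_value 0 + norm (residual 0) * (2 * B)" for n
  proof -
    have "dual_value n \<le> dual_value 0 + residual 0 \<bullet> (\<Lambda> (Suc n) - \<Lambda> 1)"
      using dual_supergradient[of "\<Lambda> (Suc n)" 0] by (simp add: dual_multiplier_Suc)
    also have "residual 0 \<bullet> (\<Lambda> (Suc n) - \<Lambda> 1) \<le> norm (residual 0) * norm (\<Lambda> (Suc n) - \<Lambda> 1)"
      by (rule norm_cauchy_schwarz)
    also have "norm (\<Lambda> (Suc n) - \<Lambda> 1) \<le> 2 * B"
      using B[of "Suc n"] B[of 1] norm_triangle_ineq4[of "\<Lambda> (Suc n)" "\<Lambda> 1"] by linarith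
    finally show ?thesis by (simp add: mult_left_mono)
  qed
  then show ?thesis by (intro bdd_aboveI2)
qed

definition dual_limit :: real where
  "dual_limit = (SUP n. dual_value n)"

lemma dual_value_LIMSEQ: "dual_value \<longlonglongrightarrow> dual_limit"
  unfolding dual_limit_def by (rule LIMSEQ_incseq_SUP[OF bdd_above_dual_value incseq_dual_value])

lemma dual_value_le_limit: "dual_value n \<le> dual_limit"
  unfolding dual_limit_def by (rule cSUP_upper[OF _ bdd_above_dual_value]) simp

lemma dual_le_dual_limit: "dual L \<le> ereal dual_limit"
proof (cases "dual L")
  case (real r)
  show ?thesis
  proof (rule ccontr)
    assume "\<not> ?thesis"
    then have "dual_limit < r" using real by simp
    then have "0 \<le> r - dual_value n" for n
      using dual_value_le_limit[of n] by linarith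
    moreover have "summable (\<lambda>n. r - dual_value n)"
      using calculation sum_dual_gap_le[of r L] real
      by (intro summableI_nonneg_bounded[where x = "(norm (proj_perp L))\<^sup>2 / (2 * \<alpha>)"]) auto
    ultimately have "(\<lambda>n. r - (r - dual_value n)) \<longlonglongrightarrow> r - 0"
      by (intro tendsto_diff tendsto_const summable_LIMSEQ_zero)
    then have "dual_value \<longlonglongrightarrow> r" by simp
    with dual_value_LIMSEQ have "dual_limit = r" by (rule LIMSEQ_unique)
    with \<open>dual_limit < r\<close> show False by simp
  qed
next
  case PInf
  then show ?thesis using dual_supergradient[of L 0] by simp
qed simp

text \<open>A cluster point of the multipliers is a maximizer: \<open>dual\<close> is an infimum of affine functions,
  each of which dominates \<open>dual_value\<close> along the iterates.\<close>

lemma dual_attains_limit: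
  obtains l where "dual l = ereal dual_limit"
proof -
  have "bounded (range (\<lambda>n. \<Lambda> (Suc n)))"
    using bounded_multipliers by (rule bounded_subset) auto
  then obtain l s where s: "strict_mono s" and lim: "((\<lambda>n. \<Lambda> (Suc n)) \<circ> s) \<longlonglongrightarrow> l"
    using bounded_imp_convergent_subsequence by blast
  have "l \<in> orthogonal_comp M"
    by (rule closed_sequentially[OF closed_subspace[OF subspace_orthogonal_comp] _ lim])
      (simp add: multiplier_in_orthogonal_comp)
  have "ereal dual_limit \<le> lagrangian y l" for y
  proof (cases "J y")
    case (real j)
    have "ereal (dual_value n) \<le> lagrangian y (\<Lambda> (Suc n))" for n
      using lagrangian_iterate_le[of n y]
      by (simp flip: dual_multiplier_Suc add: dual_multiplier_Suc_eq_lagrangian)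
    then have "dual_value n \<le> j + y \<bullet> \<Lambda> (Suc n)" for n
      by (simp add: lagrangian_def real)
    then have "dual_limit \<le> j + y \<bullet> l"
    proof (intro LIMSEQ_le)
      show "(dual_value \<circ> s) \<longlonglongrightarrow> dual_limit"
        by (rule LIMSEQ_subseq_LIMSEQ[OF dual_value_LIMSEQ s])
      show "(\<lambda>k. j + y \<bullet> ((\<lambda>n. \<Lambda> (Suc n)) \<circ> s) k) \<longlonglongrightarrow> j + y \<bullet> l"
        by (intro tendsto_intros lim)
    qed auto
    then show ?thesis by (simp add: lagrangian_def real)
  next
    case MInf
    then show ?thesis using K_not_minf by (simp add: J_def)
  qed (simp add: lagrangian_def)
  then have "ereal dual_limit \<le> dual l"
    unfolding dual_def orth_proj_ident[OF subspace_orthogonal_comp \<open>l \<in> orthogonal_comp M\<close>]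
    by (rule INF_greatest)
  with dual_le_dual_limit[of l] show thesis
    by (intro that antisym)
qed

lemma SUP_dual: "(SUP L. dual L) = ereal dual_limit"
proof -
  obtain l where "dual l = ereal dual_limit" by (rule dual_attains_limit)
  then show ?thesis
    by (intro antisym SUP_least dual_le_dual_limit) (metis SUP_upper UNIV_I)
qed

lemma dual_has_maximizer: "\<exists>l. \<forall>L. dual L \<le> dual l"
  by (metis dual_attains_limit dual_le_dual_limit)

lemma dual_gap_rate: "((\<lambda>n. ereal (real n) * ((SUP L. dual L) - dual (\<Lambda> n))) \<longlongrightarrow> 0) sequentially"
proof -
  define e where "e n = dual_limit - dual_value n" for n
  have nonneg: "0 \<le> e n" for n
    using dual_value_le_limit by (simp add: e_def)
  obtain l where "dual l = ereal dual_limit" by (rule dual_attains_limit)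
  then have "summable e"
    using sum_dual_gap_le[of dual_limit l] nonneg unfolding e_def
    by (intro summableI_nonneg_bounded[where x = "(norm (proj_perp l))\<^sup>2 / (2 * \<alpha>)"]) auto
  moreover have "decseq e"
    using incseq_dual_value by (simp add: e_def decseq_def incseq_def)
  ultimately have "(\<lambda>n. real n * e n + e n) \<longlonglongrightarrow> 0 + 0"
    using nonneg by (intro tendsto_add summable_decseq_mult_LIMSEQ_zero summable_LIMSEQ_zero)
  then have "((\<lambda>n. ereal (real (Suc n) * e n)) \<longlongrightarrow> 0) sequentially"
    by (simp add: algebra_simps zero_ereal_def)
  then show ?thesis
    by (subst filterlim_sequentially_Suc[symmetric]) (simp add: SUP_dual dual_multiplier_Suc e_def)
qed

end

theorem corollary2:
  fixes K :: "'a::euclidean_space \<Rightarrow> ereal"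
    and M :: "'a set"
    and \<alpha> :: real
    and x \<Lambda> :: "nat \<Rightarrow> 'a"
    and J h :: "'a \<Rightarrow> ereal"
  assumes "subspace M"
    and "\<alpha> > 0"
    and "convex_ereal K" and "feasible K"
    and "\<Lambda> 0 = 0"
    and "\<And>n y. K (x (Suc n)) + ereal (x (Suc n) \<bullet> \<Lambda> n + \<alpha> / 2 * (norm (x (Suc n)))\<^sup>2)
                 \<le> K y + ereal (y \<bullet> \<Lambda> n + \<alpha> / 2 * (norm y)\<^sup>2)"
    and "\<And>n. \<Lambda> (Suc n) = \<Lambda> n + \<alpha> *\<^sub>R orth_proj (orthogonal_comp M) (x (Suc n))"
    and "\<And>y. J y = K y + ereal (\<alpha> / 2 * (norm (orth_proj M y))\<^sup>2)"
    and "\<And>L. h L = (INF y. J y + ereal (y \<bullet> orth_proj (orthogonal_comp M) L))"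
    and "bounded {\<Lambda> n | n. n \<ge> 1}"
  shows "{L. \<forall>L'. h L' \<le> h L} \<noteq> {}
         \<and> fejer_monotone \<Lambda> 1 {L. \<forall>L'. h L' \<le> h L}
         \<and> ((\<lambda>n. ereal (real n) * ((SUP L. h L) - h (\<Lambda> n))) \<longlongrightarrow> 0) sequentially"
proof -
  have "range \<Lambda> \<subseteq> insert (\<Lambda> 0) {\<Lambda> n | n. n \<ge> 1}"
    by (auto simp: Suc_le_eq) (metis gr0I)
  then have "bounded (range \<Lambda>)"
    by (rule bounded_subset[rotated]) (use assms(10) in simp)
  \<comment> \<open>of feasibility only properness is used: the rest guarantees existence of the iterates,
    which are given here\<close>
  moreover have "proper_fun K"
    using assms(4) by (simp add: feasible_def)
  ultimately interpret D: bounded_augmented_dual_ascent K M \<alpha> x \<Lambda>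
    using assms(1-3,5-7) by unfold_locales
  have h: "h = D.dual"
    using assms(8,9) by (intro ext) (simp add: D.dual_def D.lagrangian_def D.J_def)
  show ?thesis
    unfolding h fejer_monotone_def
  proof (intro conjI ballI allI impI)
    show "{L. \<forall>L'. D.dual L' \<le> D.dual L} \<noteq> {}"
      using D.dual_has_maximizer by blast
    show "norm (\<Lambda> (Suc n) - z) \<le> norm (\<Lambda> n - z)"
      if "z \<in> {L. \<forall>L'. D.dual L' \<le> D.dual L}" for z n
      using that D.dist_maximizer_decrease by blast
  qed (rule D.dual_gap_rate)
qed

end
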